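(* Let $P$ be a special product rule, $X$ a set and $D:X\to\mathrm{Terms}(X)$ a function, with $P$-extension $\tilde D$. For all terms $u,v\in\mathrm{Terms}(X)$, if $u\approx v$ then $\tilde Du\approx\tilde Dv$.
   Context: Terms: for a set $X$, $\mathrm{Terms}(X)$ is the set of syntactic terms generated by $u,v::=x\mid 0\mid c\cdot u\mid u+v\mid u*v$ ($x\in X$, $c\in\mathbb Q$). A product rule is a term $P$ over $\{x,\dot x,y,\dot y\}$; $P(s_1,\dots,s_4)$ denotes substitution of $s_1,\dots,s_4$ for $x,\dot x,y,\dot y$. Term equivalence: $u\approx v$ iff $u$ and $v$ denote the same polynomial in the commutative polynomial ring $\mathbb Q[X]$ when $0,c\cdot,+,*$ are read as polynomial operations. $P$ is special if $P(x+y,\dot x+\dot y,z,\dot z)\approx P(x,\dot x,z,\dot z)+P(y,\dot y,z,\dot z)$, $P(x,\dot x,y*z,P(y,\dot y,z,\dot z))\approx P(x*y,P(x,\dot x,y,\dot y),z,\dot z)$, and $P(x,\dot x,y,\dot y)\approx P(y,\dot y,x,\dot x)$. The $P$-extension of $D:X\to\mathrm{Terms}(X)$ is $\tilde D:\mathrm{Terms}(X)\to\mathrm{Terms}(X)$ defined by $\tilde D0=0$, $\tilde Dx=Dx$, $\tilde D(c\cdot\alpha)=c\cdot\tilde D\alpha$, $\tilde D(\alpha+\beta)=\tilde D\alpha+\tilde D\beta$, $\tilde D(\alpha*\beta)=P(\alpha,\tilde D\alpha,\beta,\tilde D\beta)$. *)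

theory Defs
  imports Complex_Main "HOL-Library.Poly_Mapping"
begin

datatype 'x trm =
    Var 'x
  | Zero
  | Scale rat "'x trm"
  | Add "'x trm" "'x trm"
  | Mul "'x trm" "'x trm"

text \<open>The commutative polynomial ring Q[X], realised as the monoid algebra
  of monomials (finitely supported exponent maps) with rational coefficients.\<close>
type_synonym 'x mpoly = "('x \<Rightarrow>\<^sub>0 nat) \<Rightarrow>\<^sub>0 rat"

definition pvar :: "'x \<Rightarrow> 'x mpoly" where
  "pvar x = Poly_Mapping.single (Poly_Mapping.single x 1) 1"

definition pconst :: "rat \<Rightarrow> 'x mpoly" where
  "pconst c = Poly_Mapping.single 0 c"

primrec denote :: "'x trm \<Rightarrow> 'x mpoly" where
  "denote (Var x) = pvar x"
| "denote Zero = 0"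
| "denote (Scale c u) = pconst c * denote u"
| "denote (Add u v) = denote u + denote v"
| "denote (Mul u v) = denote u * denote v"

definition term_equiv :: "'x trm \<Rightarrow> 'x trm \<Rightarrow> bool" (infix "\<approx>" 50) where
  "u \<approx> v \<longleftrightarrow> denote u = denote v"

primrec subst :: "('x \<Rightarrow> 'y trm) \<Rightarrow> 'x trm \<Rightarrow> 'y trm" where
  "subst s (Var x) = s x"
| "subst s Zero = Zero"
| "subst s (Scale c u) = Scale c (subst s u)"
| "subst s (Add u v) = Add (subst s u) (subst s v)"
| "subst s (Mul u v) = Mul (subst s u) (subst s v)"

text \<open>Variables of a product rule: x, x-dot, y, y-dot.\<close>
datatype pv = PX | PXd | PY | PYd

type_synonym prule = "pv trm"

definition app4 :: "prule \<Rightarrow> 'y trm \<Rightarrow> 'y trm \<Rightarrow> 'y trm \<Rightarrow> 'y trm \<Rightarrow> 'y trm" where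
  "app4 P s1 s2 s3 s4 = subst (\<lambda>v. case v of PX \<Rightarrow> s1 | PXd \<Rightarrow> s2 | PY \<Rightarrow> s3 | PYd \<Rightarrow> s4) P"

datatype sv = SX | SXd | SY | SYd | SZ | SZd

definition special :: "prule \<Rightarrow> bool" where
  "special P \<longleftrightarrow>
     app4 P (Add (Var SX) (Var SY)) (Add (Var SXd) (Var SYd)) (Var SZ) (Var SZd)
       \<approx> Add (app4 P (Var SX) (Var SXd) (Var SZ) (Var SZd)) (app4 P (Var SY) (Var SYd) (Var SZ) (Var SZd))
   \<and> app4 P (Var SX) (Var SXd) (Mul (Var SY) (Var SZ)) (app4 P (Var SY) (Var SYd) (Var SZ) (Var SZd))
       \<approx> app4 P (Mul (Var SX) (Var SY)) (app4 P (Var SX) (Var SXd) (Var SY) (Var SYd)) (Var SZ) (Var SZd)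
   \<and> app4 P (Var SX) (Var SXd) (Var SY) (Var SYd) \<approx> app4 P (Var SY) (Var SYd) (Var SX) (Var SXd)"

primrec pext :: "prule \<Rightarrow> ('x \<Rightarrow> 'x trm) \<Rightarrow> 'x trm \<Rightarrow> 'x trm" where
  "pext P D Zero = Zero"
| "pext P D (Var x) = D x"
| "pext P D (Scale c a) = Scale c (pext P D a)"
| "pext P D (Add a b) = Add (pext P D a) (pext P D b)"
| "pext P D (Mul a b) = app4 P a (pext P D a) b (pext P D b)"

end

theory Submission
  imports Defs
begin

text \<open>On the space \<open>A\<close> of pairs of polynomials put the product \<open>(p, p') (q, q') = (p q, P(p, p', q, q'))\<close>.
  Specialness of \<open>P\<close> says precisely that this product is additive, associative and commutative;
  rational homogeneity follows from additivity. Adjoining a rational unit therefore gives a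
  commutative ring \<open>\<rat> \<oplus> A\<close>, and by the defining equations of the extension the map
  \<open>u \<mapsto> (0, [u], [pext P D u])\<close> from terms into it respects \<open>0\<close>, scalars, sums and products.
  By the universal property of \<open>\<rat>[X]\<close> such a map factors through the denotation \<open>[u]\<close>,
  so \<open>[u] = [v]\<close> forces \<open>[pext P D u] = [pext P D v]\<close>.\<close>

definition monom_eval :: "('x \<Rightarrow> 'a::comm_monoid_mult) \<Rightarrow> ('x \<Rightarrow>\<^sub>0 nat) \<Rightarrow> 'a" where
  "monom_eval \<rho> m = (\<Prod>x\<in>Poly_Mapping.keys m. \<rho> x ^ Poly_Mapping.lookup m x)"

lemma monom_eval_superset:
  assumes "finite S" "Poly_Mapping.keys m \<subseteq> S"
  shows "monom_eval \<rho> m = (\<Prod>x\<in>S. \<rho> x ^ Poly_Mapping.lookup m x)"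
  unfolding monom_eval_def
  by (rule prod.mono_neutral_left) (use assms in \<open>auto simp: in_keys_iff\<close>)

lemma monom_eval_add: "monom_eval \<rho> (m + n) = monom_eval \<rho> m * monom_eval \<rho> n"
proof -
  let ?S = "Poly_Mapping.keys m \<union> Poly_Mapping.keys n"
  have "monom_eval \<rho> (m + n) = (\<Prod>x\<in>?S. \<rho> x ^ Poly_Mapping.lookup (m + n) x)"
    by (rule monom_eval_superset) (simp_all add: keys_add)
  also have "\<dots> = (\<Prod>x\<in>?S. \<rho> x ^ Poly_Mapping.lookup m x)
      * (\<Prod>x\<in>?S. \<rho> x ^ Poly_Mapping.lookup n x)"
    by (simp add: lookup_add power_add prod.distrib)
  also have "\<dots> = monom_eval \<rho> m * monom_eval \<rho> n"
    by (subst (1 2) monom_eval_superset[of ?S]) auto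
  finally show ?thesis .
qed

lemma monom_eval_single [simp]: "monom_eval \<rho> (Poly_Mapping.single x n) = \<rho> x ^ n"
  by (simp add: monom_eval_def)

lemma poly_mapping_sum_single:
  "p = (\<Sum>m\<in>Poly_Mapping.keys p. Poly_Mapping.single m (Poly_Mapping.lookup p m))"
  by (rule poly_mapping_eqI) (simp add: lookup_sum lookup_single when_def in_keys_iff)

locale rat_algebra =
  fixes \<kappa> :: "rat \<Rightarrow> 'a::comm_ring_1"
  assumes hom_1: "\<kappa> 1 = 1"
    and hom_add: "\<kappa> (a + b) = \<kappa> a + \<kappa> b"
    and hom_mult: "\<kappa> (a * b) = \<kappa> a * \<kappa> b"
begin

lemma hom_0 [simp]: "\<kappa> 0 = 0"
  using hom_add[of 0 0] by simp

definition mpoly_eval :: "('x \<Rightarrow> 'a) \<Rightarrow> 'x mpoly \<Rightarrow> 'a" where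
  "mpoly_eval \<rho> p = (\<Sum>m\<in>Poly_Mapping.keys p. \<kappa> (Poly_Mapping.lookup p m) * monom_eval \<rho> m)"

lemma mpoly_eval_0 [simp]: "mpoly_eval \<rho> 0 = 0"
  by (simp add: mpoly_eval_def)

lemma mpoly_eval_add: "mpoly_eval \<rho> (p + q) = mpoly_eval \<rho> p + mpoly_eval \<rho> q"
  unfolding mpoly_eval_def
  by (rule setsum_keys_plus_distrib) (simp_all add: hom_add distrib_right)

lemma mpoly_eval_sum: "mpoly_eval \<rho> (sum f A) = (\<Sum>a\<in>A. mpoly_eval \<rho> (f a))"
  by (induction A rule: infinite_finite_induct) (simp_all add: mpoly_eval_add)

lemma mpoly_eval_single: "mpoly_eval \<rho> (Poly_Mapping.single m c) = \<kappa> c * monom_eval \<rho> m"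
  by (simp add: mpoly_eval_def)

lemma mpoly_eval_mult: "mpoly_eval \<rho> (p * q) = mpoly_eval \<rho> p * mpoly_eval \<rho> q"
proof -
  let ?P = "Poly_Mapping.keys p" and ?Q = "Poly_Mapping.keys q"
  have "p * q = (\<Sum>m\<in>?P. Poly_Mapping.single m (Poly_Mapping.lookup p m))
      * (\<Sum>n\<in>?Q. Poly_Mapping.single n (Poly_Mapping.lookup q n))"
    by (simp flip: poly_mapping_sum_single)
  also have "\<dots> = (\<Sum>m\<in>?P. \<Sum>n\<in>?Q.
      Poly_Mapping.single (m + n) (Poly_Mapping.lookup p m * Poly_Mapping.lookup q n))"
    by (simp add: sum_product mult_single)
  finally have "mpoly_eval \<rho> (p * q) = (\<Sum>m\<in>?P. \<Sum>n\<in>?Q.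
      (\<kappa> (Poly_Mapping.lookup p m) * monom_eval \<rho> m)
      * (\<kappa> (Poly_Mapping.lookup q n) * monom_eval \<rho> n))"
    by (simp add: mpoly_eval_sum mpoly_eval_single monom_eval_add hom_mult mult_ac)
  also have "\<dots> = mpoly_eval \<rho> p * mpoly_eval \<rho> q"
    by (simp add: mpoly_eval_def sum_product)
  finally show ?thesis .
qed

lemma mpoly_eval_pvar [simp]: "mpoly_eval \<rho> (pvar x) = \<rho> x"
  unfolding pvar_def mpoly_eval_single by (simp add: hom_1)

lemma mpoly_eval_pconst [simp]: "mpoly_eval \<rho> (pconst c) = \<kappa> c"
  by (simp add: pconst_def mpoly_eval_single monom_eval_def)

definition term_hom :: "('x trm \<Rightarrow> 'a) \<Rightarrow> bool" where
  "term_hom h \<longleftrightarrow> h Zero = 0 \<and> (\<forall>c u. h (Scale c u) = \<kappa> c * h u)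
     \<and> (\<forall>u v. h (Add u v) = h u + h v) \<and> (\<forall>u v. h (Mul u v) = h u * h v)"

lemma term_hom_eq_mpoly_eval:
  assumes "term_hom h"
  shows "h u = mpoly_eval (\<lambda>x. h (Var x)) (denote u)"
  using assms by (induction u) (simp_all add: term_hom_def mpoly_eval_add mpoly_eval_mult)

lemma term_hom_respects_equiv: "term_hom h \<Longrightarrow> u \<approx> v \<Longrightarrow> h u = h v"
  by (metis term_hom_eq_mpoly_eval term_equiv_def)

lemma mpoly_eval_denote_subst:
  "mpoly_eval \<rho> (denote (subst \<sigma> t)) = mpoly_eval (\<lambda>v. mpoly_eval \<rho> (denote (\<sigma> v))) (denote t)"
proof -
  have "term_hom (\<lambda>t. mpoly_eval \<rho> (denote (subst \<sigma> t)))"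
    by (simp add: term_hom_def mpoly_eval_add mpoly_eval_mult)
  from term_hom_eq_mpoly_eval[OF this] show ?thesis by simp
qed

end

lemma pconst_add: "pconst (a + b) = pconst a + pconst b"
  by (simp add: pconst_def single_add)

lemma pconst_mult: "pconst (a * b) = pconst a * pconst b"
  by (simp add: pconst_def mult_single)

interpretation mpoly: rat_algebra pconst
  by unfold_locales (simp_all add: pconst_add pconst_mult, simp add: pconst_def)

lemma denote_subst: "denote (subst \<sigma> t) = mpoly.mpoly_eval (\<lambda>v. denote (\<sigma> v)) (denote t)"
proof -
  have "mpoly.term_hom (\<lambda>t. denote (subst \<sigma> t))"
    by (simp add: mpoly.term_hom_def)
  from mpoly.term_hom_eq_mpoly_eval[OF this] show ?thesis by simp
qed

definition app4_poly :: "prule \<Rightarrow> 'y mpoly \<Rightarrow> 'y mpoly \<Rightarrow> 'y mpoly \<Rightarrow> 'y mpoly \<Rightarrow> 'y mpoly" where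
  "app4_poly P a b c d = mpoly.mpoly_eval (case_pv a b c d) (denote P)"

lemma denote_app4:
  "denote (app4 P s1 s2 s3 s4) = app4_poly P (denote s1) (denote s2) (denote s3) (denote s4)"
proof -
  have "(\<lambda>v. denote (case_pv s1 s2 s3 s4 v)) = case_pv (denote s1) (denote s2) (denote s3) (denote s4)"
    by (simp add: fun_eq_iff split: pv.split)
  then show ?thesis by (simp add: app4_def app4_poly_def denote_subst)
qed

lemma mpoly_eval_denote_app4:
  "mpoly.mpoly_eval \<rho> (denote (app4 P s1 s2 s3 s4)) = app4_poly P
     (mpoly.mpoly_eval \<rho> (denote s1)) (mpoly.mpoly_eval \<rho> (denote s2))
     (mpoly.mpoly_eval \<rho> (denote s3)) (mpoly.mpoly_eval \<rho> (denote s4))"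
proof -
  have "(\<lambda>v. mpoly.mpoly_eval \<rho> (denote (case_pv s1 s2 s3 s4 v))) = case_pv
      (mpoly.mpoly_eval \<rho> (denote s1)) (mpoly.mpoly_eval \<rho> (denote s2))
      (mpoly.mpoly_eval \<rho> (denote s3)) (mpoly.mpoly_eval \<rho> (denote s4))"
    by (simp add: fun_eq_iff split: pv.split)
  then show ?thesis by (simp add: app4_def app4_poly_def mpoly.mpoly_eval_denote_subst)
qed

lemma additive_imp_rat_homogeneous:
  fixes f :: "'x mpoly \<Rightarrow> 'x mpoly \<Rightarrow> 'y mpoly"
  assumes add: "\<And>x y xd yd. f (x + y) (xd + yd) = f x xd + f y yd"
  shows "f (pconst c * x) (pconst c * xd) = pconst c * f x xd"
proof -
  have int: "f (of_int k * x) (of_int k * xd) = of_int k * f x xd" for k x xd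
  proof (induction k rule: int_induct[of _ 0])
    case base
    show ?case
      using add[of 0 0 0 0] by simp
  next
    case (step1 i)
    then show ?case
      using add[of "of_int i * x" x "of_int i * xd" xd] by (simp add: distrib_right)
  next
    case (step2 i)
    then show ?case
      using add[of "of_int (i - 1) * x" x "of_int (i - 1) * xd" xd] by (simp add: algebra_simps)
  qed
  obtain a b where c: "c = of_int a / of_int b" and "b \<noteq> 0"
    by (metis Fract_of_int_quotient Rat_cases less_irrefl)
  define e where "e = (pconst (1 / of_int b) :: 'y mpoly)"
  have e_b: "e * of_int b = 1"
    using \<open>b \<noteq> 0\<close> by (simp add: e_def pconst_def mult_single flip: single_of_int)
  have e_a: "e * of_int a = pconst c"
    by (simp add: e_def c pconst_def mult_single flip: single_of_int)
  have b_c: "of_int b * pconst c = (of_int a :: 'x mpoly)"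
    using \<open>b \<noteq> 0\<close> by (simp add: c pconst_def mult_single flip: single_of_int)
  have "of_int b * f (pconst c * x) (pconst c * xd)
      = f (of_int b * pconst c * x) (of_int b * pconst c * xd)"
    by (simp add: int mult.assoc)
  also have "\<dots> = of_int a * f x xd"
    by (simp add: b_c int)
  finally have "e * of_int b * f (pconst c * x) (pconst c * xd) = e * of_int a * f x xd"
    by (simp add: mult.assoc)
  then show ?thesis
    by (simp add: e_b e_a)
qed

locale special_product_rule =
  fixes P :: prule
  assumes special: "special P"
begin

lemma special_identities:
  fixes x xd y yd z zd :: "'y mpoly"
  shows "app4_poly P (x + y) (xd + yd) z zd = app4_poly P x xd z zd + app4_poly P y yd z zd"
    and "app4_poly P x xd (y * z) (app4_poly P y yd z zd)
       = app4_poly P (x * y) (app4_poly P x xd y yd) z zd"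
    and "app4_poly P x xd y yd = app4_poly P y yd x xd"
proof -
  define \<rho> where "\<rho> = case_sv x xd y yd z zd"
  note identities = special[unfolded special_def term_equiv_def]
  note eval = arg_cong[where f = "mpoly.mpoly_eval \<rho>"]
  show "app4_poly P (x + y) (xd + yd) z zd = app4_poly P x xd z zd + app4_poly P y yd z zd"
    using eval[OF identities[THEN conjunct1]]
    by (simp add: mpoly_eval_denote_app4 mpoly.mpoly_eval_add \<rho>_def)
  show "app4_poly P x xd (y * z) (app4_poly P y yd z zd)
      = app4_poly P (x * y) (app4_poly P x xd y yd) z zd"
    using eval[OF identities[THEN conjunct2, THEN conjunct1]]
    by (simp add: mpoly_eval_denote_app4 mpoly.mpoly_eval_mult \<rho>_def)
  show "app4_poly P x xd y yd = app4_poly P y yd x xd"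
    using eval[OF identities[THEN conjunct2, THEN conjunct2]]
    by (simp add: mpoly_eval_denote_app4 \<rho>_def)
qed

lemmas add_left = special_identities(1)
  and assoc = special_identities(2)
  and commute = special_identities(3)

lemma add_right:
  "app4_poly P z zd (x + y) (xd + yd) = app4_poly P z zd x xd + app4_poly P z zd y yd"
  by (simp add: commute[of z zd] add_left)

lemma zero_left [simp]: "app4_poly P 0 0 z zd = 0"
  using add_left[of 0 0 0 0 z zd] by simp

lemma scale_left:
  "app4_poly P (pconst c * x) (pconst c * xd) z zd = pconst c * app4_poly P x xd z zd"
  using additive_imp_rat_homogeneous[where f = "\<lambda>x xd. app4_poly P x xd z zd"] add_left by blast

lemma scale_right:
  "app4_poly P z zd (pconst c * x) (pconst c * xd) = pconst c * app4_poly P z zd x xd"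
  by (simp add: commute[of z zd] scale_left)

text \<open>The derivative component of associativity in \<open>\<rat> \<oplus> A\<close>.\<close>

lemma unitization_assoc:
  fixes r s t :: rat and p m q k w l :: "'y mpoly"
  defines "ab_val \<equiv> pconst r * q + pconst s * p + p * q"
    and "ab_der \<equiv> pconst r * k + pconst s * m + app4_poly P p m q k"
    and "bc_val \<equiv> pconst s * w + pconst t * q + q * w"
    and "bc_der \<equiv> pconst s * l + pconst t * k + app4_poly P q k w l"
  shows "pconst (r * s) * l + pconst t * ab_der + app4_poly P ab_val ab_der w l
       = pconst r * bc_der + pconst (s * t) * m + app4_poly P p m bc_val bc_der"
proof -
  have "app4_poly P ab_val ab_der w l = pconst r * app4_poly P q k w l
      + pconst s * app4_poly P p m w l + app4_poly P (p * q) (app4_poly P p m q k) w l"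
    by (simp add: ab_val_def ab_der_def add_left scale_left)
  moreover have "app4_poly P p m bc_val bc_der = pconst s * app4_poly P p m w l
      + pconst t * app4_poly P p m q k + app4_poly P (p * q) (app4_poly P p m q k) w l"
    by (simp add: bc_val_def bc_der_def add_right scale_right assoc)
  ultimately show ?thesis
    by (simp add: ab_der_def bc_der_def pconst_mult algebra_simps)
qed

end

lemma special_Zero: "special Zero"
  by (simp add: special_def app4_def term_equiv_def)

typedef special_rule = "{P. special P}" morphisms rule_of Abs_special_rule
  using special_Zero by blast

interpretation rule: special_product_rule "rule_of Q" for Q
  using rule_of by unfold_locales simp

text \<open>The derivative component carries all special rules at once, because a type class
  instance cannot depend on a parameter \<open>P\<close>.\<close>

datatype 'x jet = Jet (jet_scalar: rat) (jet_val: "'x mpoly") (jet_der: "special_rule \<Rightarrow> 'x mpoly")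

lemma jet_eqI:
  "jet_scalar a = jet_scalar b \<Longrightarrow> jet_val a = jet_val b \<Longrightarrow> (\<And>Q. jet_der a Q = jet_der b Q)
    \<Longrightarrow> a = b"
  by (rule jet.expand) auto

instantiation jet :: (type) comm_ring_1
begin

definition "0 = Jet 0 0 (\<lambda>_. 0)"

definition "1 = Jet 1 0 (\<lambda>_. 0)"

definition "a + b =
  Jet (jet_scalar a + jet_scalar b) (jet_val a + jet_val b) (\<lambda>Q. jet_der a Q + jet_der b Q)"

definition "- a = Jet (- jet_scalar a) (- jet_val a) (\<lambda>Q. - jet_der a Q)"

definition "a - b =
  Jet (jet_scalar a - jet_scalar b) (jet_val a - jet_val b) (\<lambda>Q. jet_der a Q - jet_der b Q)"

definition "a * b = Jet (jet_scalar a * jet_scalar b)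
   (pconst (jet_scalar a) * jet_val b + pconst (jet_scalar b) * jet_val a + jet_val a * jet_val b)
   (\<lambda>Q. pconst (jet_scalar a) * jet_der b Q + pconst (jet_scalar b) * jet_der a Q
      + app4_poly (rule_of Q) (jet_val a) (jet_der a Q) (jet_val b) (jet_der b Q))"

instance
proof
  fix a b c :: "'a jet"
  show "a * b * c = a * (b * c)"
  proof (rule jet_eqI)
    show "jet_scalar (a * b * c) = jet_scalar (a * (b * c))"
      unfolding times_jet_def by simp
    show "jet_val (a * b * c) = jet_val (a * (b * c))"
      unfolding times_jet_def by (simp add: pconst_mult algebra_simps)
    show "jet_der (a * b * c) Q = jet_der (a * (b * c)) Q" for Q
      unfolding times_jet_def jet.sel by (rule rule.unitization_assoc)
  qed
  show "a * b = b * a"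
    by (rule jet_eqI) (simp_all add: times_jet_def rule.commute[of _ "jet_val a"] algebra_simps)
  show "1 * a = a"
    by (rule jet_eqI) (simp_all add: times_jet_def one_jet_def mpoly.hom_1)
  show "(a + b) * c = a * c + b * c"
    by (rule jet_eqI) (simp_all add: times_jet_def plus_jet_def rule.add_left pconst_add algebra_simps)
  show "(0::'a jet) \<noteq> 1"
    by (simp add: zero_jet_def one_jet_def)
  show "a + b + c = a + (b + c)"
    by (rule jet_eqI) (simp_all add: plus_jet_def algebra_simps)
  show "a + b = b + a"
    by (rule jet_eqI) (simp_all add: plus_jet_def algebra_simps)
  show "0 + a = a"
    by (rule jet_eqI) (simp_all add: plus_jet_def zero_jet_def)
  show "- a + a = 0"
    by (rule jet_eqI) (simp_all add: plus_jet_def zero_jet_def uminus_jet_def)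
  show "a - b = a + - b"
    by (rule jet_eqI) (simp_all add: plus_jet_def minus_jet_def uminus_jet_def)
qed

end

definition jet_of_rat :: "rat \<Rightarrow> 'x jet" where
  "jet_of_rat c = Jet c 0 (\<lambda>_. 0)"

interpretation jet: rat_algebra jet_of_rat
  by unfold_locales (simp_all add: jet_of_rat_def one_jet_def plus_jet_def times_jet_def)

definition jet_of_term :: "('x \<Rightarrow> 'x trm) \<Rightarrow> 'x trm \<Rightarrow> 'x jet" where
  "jet_of_term D u = Jet 0 (denote u) (\<lambda>Q. denote (pext (rule_of Q) D u))"

lemma term_hom_jet_of_term: "jet.term_hom (jet_of_term D)"
  by (simp add: jet.term_hom_def jet_of_term_def jet_of_rat_def zero_jet_def plus_jet_def
      times_jet_def denote_app4)

theorem mainTheorem8: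
  fixes P :: prule and D :: "'x \<Rightarrow> 'x trm" and u v :: "'x trm"
  assumes "special P"
    and "u \<approx> v"
  shows "pext P D u \<approx> pext P D v"
proof -
  have "jet_of_term D u = jet_of_term D v"
    using term_hom_jet_of_term \<open>u \<approx> v\<close> by (rule jet.term_hom_respects_equiv)
  then have "jet_der (jet_of_term D u) (Abs_special_rule P)
      = jet_der (jet_of_term D v) (Abs_special_rule P)"
    by simp
  then show ?thesis
    using \<open>special P\<close> by (simp add: jet_of_term_def term_equiv_def Abs_special_rule_inverse)
qed

end
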